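(* Let $\tilde L$ be a minimum-size counterexample. Then the greatest element $1_{\tilde L}$ is join-reducible in $\tilde L$, i.e. it upper covers at least two elements.
   Context: For a poset $P$, $x$ upper covers $y$ if $y<x$ with nothing strictly between. Join-irreducible: upper covers exactly one element; join-reducible: upper covers more than one element. For $x\in P$, ${\uparrow}x=\{y: x\le y\}$. A counterexample is a finite lattice $L$ with $|L|>1$ in which every join-irreducible $j$ satisfies $|{\uparrow}j|>|L|/2$; a minimum-size counterexample is a counterexample $\tilde L$ such that no counterexample has fewer elements. *)

theory Defs
  imports Complex_Main
begin

definition is_poset :: "'a set \<Rightarrow> ('a \<Rightarrow> 'a \<Rightarrow> bool) \<Rightarrow> bool" where
  "is_poset S le \<longleftrightarrow>
     (\<forall>x\<in>S. le x x) \<and>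
     (\<forall>x\<in>S. \<forall>y\<in>S. le x y \<and> le y x \<longrightarrow> x = y) \<and>
     (\<forall>x\<in>S. \<forall>y\<in>S. \<forall>z\<in>S. le x y \<and> le y z \<longrightarrow> le x z)"

definition is_lub :: "'a set \<Rightarrow> ('a \<Rightarrow> 'a \<Rightarrow> bool) \<Rightarrow> 'a \<Rightarrow> 'a \<Rightarrow> 'a \<Rightarrow> bool" where
  "is_lub S le x y z \<longleftrightarrow> z \<in> S \<and> le x z \<and> le y z \<and> (\<forall>w\<in>S. le x w \<and> le y w \<longrightarrow> le z w)"

definition is_glb :: "'a set \<Rightarrow> ('a \<Rightarrow> 'a \<Rightarrow> bool) \<Rightarrow> 'a \<Rightarrow> 'a \<Rightarrow> 'a \<Rightarrow> bool" where
  "is_glb S le x y z \<longleftrightarrow> z \<in> S \<and> le z x \<and> le z y \<and> (\<forall>w\<in>S. le w x \<and> le w y \<longrightarrow> le w z)"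

definition finite_lattice :: "'a set \<Rightarrow> ('a \<Rightarrow> 'a \<Rightarrow> bool) \<Rightarrow> bool" where
  "finite_lattice S le \<longleftrightarrow> finite S \<and> S \<noteq> {} \<and> is_poset S le \<and>
     (\<forall>x\<in>S. \<forall>y\<in>S. (\<exists>z. is_lub S le x y z) \<and> (\<exists>z. is_glb S le x y z))"

definition upper_covers :: "'a set \<Rightarrow> ('a \<Rightarrow> 'a \<Rightarrow> bool) \<Rightarrow> 'a \<Rightarrow> 'a \<Rightarrow> bool" where
  "upper_covers S le x y \<longleftrightarrow> x \<in> S \<and> y \<in> S \<and> le y x \<and> y \<noteq> x \<and>
     \<not> (\<exists>z\<in>S. le y z \<and> le z x \<and> z \<noteq> y \<and> z \<noteq> x)"

definition lower_covers_set :: "'a set \<Rightarrow> ('a \<Rightarrow> 'a \<Rightarrow> bool) \<Rightarrow> 'a \<Rightarrow> 'a set" where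
  "lower_covers_set S le x = {y \<in> S. upper_covers S le x y}"

definition join_irreducible :: "'a set \<Rightarrow> ('a \<Rightarrow> 'a \<Rightarrow> bool) \<Rightarrow> 'a \<Rightarrow> bool" where
  "join_irreducible S le x \<longleftrightarrow> x \<in> S \<and> card (lower_covers_set S le x) = 1"

definition join_reducible :: "'a set \<Rightarrow> ('a \<Rightarrow> 'a \<Rightarrow> bool) \<Rightarrow> 'a \<Rightarrow> bool" where
  "join_reducible S le x \<longleftrightarrow> x \<in> S \<and> card (lower_covers_set S le x) > 1"

definition up_set :: "'a set \<Rightarrow> ('a \<Rightarrow> 'a \<Rightarrow> bool) \<Rightarrow> 'a \<Rightarrow> 'a set" where
  "up_set S le x = {y \<in> S. le x y}"

definition counterexample :: "'a set \<Rightarrow> ('a \<Rightarrow> 'a \<Rightarrow> bool) \<Rightarrow> bool" where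
  "counterexample S le \<longleftrightarrow> finite_lattice S le \<and> card S > 1 \<and>
     (\<forall>j\<in>S. join_irreducible S le j \<longrightarrow> real (card (up_set S le j)) > real (card S) / 2)"

text \<open>Minimality is against all counterexamples; every finite lattice is isomorphic to one
  carried by a subset of nat, so quantifying over nat-carried lattices is sufficient.\<close>
definition min_counterexample :: "'a set \<Rightarrow> ('a \<Rightarrow> 'a \<Rightarrow> bool) \<Rightarrow> bool" where
  "min_counterexample S le \<longleftrightarrow> counterexample S le \<and>
     \<not> (\<exists>(S' :: nat set) le'. counterexample S' le' \<and> card S' < card S)"

end

theory Submission
  imports Defs
begin

text \<open>The up-set of the greatest element is a singleton, so in a lattice with at least two
  elements it is too small for the top to be join-irreducible in a counterexample. On the other
  hand a finite lattice with at least two elements has a coatom, so the top upper covers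
  something; hence it covers at least two elements.\<close>

lemma up_set_greatest:
  assumes "is_poset S le" and "g \<in> S" and "\<forall>x\<in>S. le x g"
  shows "up_set S le g = {g}"
  using assms unfolding is_poset_def up_set_def by blast

lemma up_set_psubset:
  assumes "is_poset S le" and "z \<in> S" and "w \<in> S" and "le z w" and "w \<noteq> z"
  shows "up_set S le w \<subset> up_set S le z"
  using assms unfolding is_poset_def up_set_def by blast

lemma lower_covers_set_nonempty:
  assumes "is_poset S le" and "finite S" and "x \<in> S"
    and "y \<in> S" and "le y x" and "y \<noteq> x"
  shows "lower_covers_set S le x \<noteq> {}"
proof -
  let ?below = "\<lambda>z. z \<in> S \<and> le z x \<and> z \<noteq> x"
  obtain z where z: "?below z"
    and z_least: "\<And>w. ?below w \<Longrightarrow> card (up_set S le z) \<le> card (up_set S le w)"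
    using ex_has_least_nat[of ?below y "\<lambda>z. card (up_set S le z)"] assms(4-6) by blast
  \<comment> \<open>an element below x with the smallest up-set is covered by x\<close>
  have "upper_covers S le x z"
    unfolding upper_covers_def
  proof (intro conjI)
    show "x \<in> S" "z \<in> S" "le z x" "z \<noteq> x" using z assms(3) by auto
    show "\<not> (\<exists>w\<in>S. le z w \<and> le w x \<and> w \<noteq> z \<and> w \<noteq> x)"
    proof
      assume "\<exists>w\<in>S. le z w \<and> le w x \<and> w \<noteq> z \<and> w \<noteq> x"
      then obtain w where w: "w \<in> S" "le z w" "le w x" "w \<noteq> z" "w \<noteq> x" by blast
      have "up_set S le w \<subset> up_set S le z"
        using up_set_psubset[OF assms(1)] z w by blast
      then have "card (up_set S le w) < card (up_set S le z)"
        by (rule psubset_card_mono[rotated]) (simp add: up_set_def assms(2))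
      with z_least[of w] w show False by simp
    qed
  qed
  with z show ?thesis by (auto simp: lower_covers_set_def)
qed

lemma counterexample_join_irreducible_up_set:
  assumes "counterexample S le" and "join_irreducible S le j"
  shows "card S < 2 * card (up_set S le j)"
proof -
  have "real (card (up_set S le j)) > real (card S) / 2"
    using assms unfolding counterexample_def join_irreducible_def by blast
  then show ?thesis by linarith
qed

lemma join_reducibleI:
  assumes "finite S" and "x \<in> S"
    and "lower_covers_set S le x \<noteq> {}" and "\<not> join_irreducible S le x"
  shows "join_reducible S le x"
proof -
  have "finite (lower_covers_set S le x)"
    using assms(1) by (simp add: lower_covers_set_def)
  with assms(3) have "card (lower_covers_set S le x) \<noteq> 0" by simp
  with assms(2,4) show ?thesis
    unfolding join_irreducible_def join_reducible_def by simp
qed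

theorem corollary2p4:
  fixes S :: "'a set" and le :: "'a \<Rightarrow> 'a \<Rightarrow> bool" and top :: 'a
  assumes "min_counterexample S le"
    and "top \<in> S" and "\<forall>x\<in>S. le x top"
  shows "join_reducible S le top"
proof -
  have ce: "counterexample S le" using assms(1) by (simp add: min_counterexample_def)
  then have fin: "finite S" and two: "card S > 1" and poset: "is_poset S le"
    by (auto simp: counterexample_def finite_lattice_def)
  have up_top: "up_set S le top = {top}"
    using up_set_greatest[OF poset assms(2,3)] .
  have "\<not> join_irreducible S le top"
    using counterexample_join_irreducible_up_set[OF ce] up_top two by fastforce
  moreover obtain y where "y \<in> S" "y \<noteq> top"
    using two card_le_Suc0_iff_eq[OF fin] assms(2) by (auto simp: not_le[symmetric])
  then have "lower_covers_set S le top \<noteq> {}"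
    using lower_covers_set_nonempty[OF poset fin assms(2)] assms(3) by blast
  ultimately show ?thesis
    using join_reducibleI[OF fin assms(2)] by blast
qed

end
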